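(* Let $V$ be a positive dimensional real normed vector space and $\varphi:V\to V$ an invertible linear map. Let $C\subseteq V$ be a convex cone with $\varphi(C)=C$. Suppose all eigenvalues of $\varphi$ are of modulus greater than $1$. Then $(\varphi-\operatorname{id}_V)^{-1}(C)\subseteq C$.
   Context: $(\varphi-\operatorname{id}_V)^{-1}(C)$ denotes the preimage of $C$ under the linear map $\varphi-\operatorname{id}_V$. *)

theory Defs
  imports "HOL-Analysis.Analysis"
begin

text \<open>Eigenvalues of a real linear map f are understood as eigenvalues of its
complexification: mu = a + i b is an eigenvalue iff there is a nonzero
complex vector z = x + i y with f x + i f y = mu (x + i y).\<close>
definition complex_eigenvalue :: "('a::real_vector \<Rightarrow> 'a) \<Rightarrow> complex \<Rightarrow> bool" where
  "complex_eigenvalue f \<mu> \<longleftrightarrow>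
     (\<exists>x y. (x \<noteq> 0 \<or> y \<noteq> 0) \<and>
        f x = Re \<mu> *\<^sub>R x - Im \<mu> *\<^sub>R y \<and>
        f y = Im \<mu> *\<^sub>R x + Re \<mu> *\<^sub>R y)"

end

theory Submission
  imports Defs "Jordan_Normal_Form.Spectral_Radius"
begin

text \<open>Let psi be the inverse of phi. Its complex eigenvalues lie in the open unit disc, so
by the Jordan normal form of its matrix the iterates of psi tend to 0. If phi v - v lies in C,
so does v - psi v = psi (phi v - v), and telescoping writes v as the sum of the series
sum_k psi^k (v - psi v), whose terms lie in C. Such a sum lies in C although C need not be
closed: some of the terms form a basis B of the span of all of them, and for large m the tail
of the series lies in span B with all coordinates above -1, so adding it to the terms forming B,
which occur among the first m, stays in C.\<close>

unbundle no vec_syntax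
no_notation Matrix.scalar_prod (infix \<open>\<bullet>\<close> 70)

section \<open>Series in finite-dimensional convex cones\<close>

lemma convex_cone_sum:
  assumes "convex_cone C" and "\<And>i. i \<in> I \<Longrightarrow> f i \<in> C"
  shows "sum f I \<in> C"
  using assms(2)
proof (induction I rule: infinite_finite_induct)
  case (insert i I)
  then show ?case using convex_cone_add[OF assms(1)] by simp
qed (use convex_cone_contains_0[OF assms(1)] in simp_all)

lemma convex_cone_sum_add_span:
  fixes B :: "'a::euclidean_space set"
  assumes C: "convex_cone C" and "B \<subseteq> C" and indep: "independent B" and x: "x \<in> span B"
    and ge: "\<And>b. b \<in> B \<Longrightarrow> representation B x b \<ge> -1"
  shows "(\<Sum>b\<in>B. b) + x \<in> C"
proof -
  have fin: "finite B" using independent_bound[OF indep] by simp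
  have "(\<Sum>b\<in>B. b) + x = (\<Sum>b\<in>B. b) + (\<Sum>b\<in>B. representation B x b *\<^sub>R b)"
    using sum_representation_eq[OF indep x fin order_refl] by simp
  also have "\<dots> = (\<Sum>b\<in>B. (1 + representation B x b) *\<^sub>R b)"
    by (simp add: scaleR_add_left sum.distrib)
  also have "\<dots> \<in> C"
    using ge \<open>B \<subseteq> C\<close> by (intro convex_cone_sum[OF C] convex_cone_scaleR[OF C]) force+
  finally show ?thesis .
qed

lemma representation_tendsto_zero:
  fixes t :: "nat \<Rightarrow> 'a::euclidean_space"
  assumes indep: "independent B" and t: "\<And>m. t m \<in> span B" and lim: "t \<longlonglongrightarrow> 0"
  shows "(\<lambda>m. representation B (t m) b) \<longlonglongrightarrow> 0"
proof -
  define B' where "B' = extend_basis B"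
  have indep': "independent B'" and span': "span B' = UNIV" and "B \<subseteq> B'"
    using indep by (simp_all add: B'_def independent_extend_basis extend_basis_superset)
  have "representation B (t m) = representation B' (t m)" for m
    using representation_extend[OF indep' t \<open>B \<subseteq> B'\<close>] by simp
  moreover have "(\<lambda>m. representation B' (t m) b) \<longlonglongrightarrow> representation B' 0 b"
    using bounded_linear.tendsto[OF bounded_linear_representation[OF indep' span'] lim] .
  ultimately show ?thesis by (simp add: representation_zero)
qed

lemma maximal_independent_subfamily:
  fixes g :: "'i \<Rightarrow> 'a::euclidean_space"
  obtains I where "finite I" "inj_on g I" "independent (g ` I)" "range g \<subseteq> span (g ` I)"
proof -
  obtain B where B: "B \<subseteq> range g" "independent B" "range g \<subseteq> span B"
    by (rule maximal_independent_subset)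
  then obtain I where I: "inj_on g I" "B = g ` I"
    by (auto simp: subset_image_inj)
  have "finite B" using independent_bound[OF B(2)] by simp
  with I B show thesis by (intro that) (auto simp: finite_image_iff)
qed

lemma sums_mem_convex_cone:
  fixes g :: "nat \<Rightarrow> 'a::euclidean_space"
  assumes C: "convex_cone C" and g: "\<And>k. g k \<in> C" and sums: "g sums v"
  shows "v \<in> C"
proof -
  obtain I where I: "finite I" "inj_on g I" "independent (g ` I)" "range g \<subseteq> span (g ` I)"
    by (rule maximal_independent_subfamily)
  define B where "B = g ` I"
  have B: "independent B" "finite B" "range g \<subseteq> span B" "B \<subseteq> C"
    using I g by (auto simp: B_def)
  have partial_span: "(\<Sum>k<m. g k) \<in> span B" for m
    using B(3) by (intro span_sum) auto
  have "v \<in> span B"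
    using sums unfolding sums_def by (rule closed_sequentially[OF closed_span partial_span])
  define t where "t m = v - (\<Sum>k<m. g k)" for m
  have t_span: "t m \<in> span B" for m
    unfolding t_def using \<open>v \<in> span B\<close> partial_span by (rule span_diff)
  have "t \<longlonglongrightarrow> 0"
    unfolding t_def using tendsto_diff[OF tendsto_const[of v] sums[unfolded sums_def]] by simp
  then have "(\<lambda>m. representation B (t m) b) \<longlonglongrightarrow> 0" for b
    by (rule representation_tendsto_zero[OF B(1) t_span])
  then have "\<forall>\<^sub>F m in sequentially. representation B (t m) b > -1" for b
    by (rule order_tendstoD(1)) simp
  then have "\<forall>\<^sub>F m in sequentially. \<forall>b\<in>B. representation B (t m) b > -1"
    by (simp add: eventually_ball_finite_distrib[OF B(2)])
  moreover have "\<forall>\<^sub>F m in sequentially. \<forall>i\<in>I. i < m"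
    by (simp add: eventually_ball_finite_distrib[OF I(1)] eventually_gt_at_top)
  ultimately have "\<forall>\<^sub>F m in sequentially. (\<forall>b\<in>B. representation B (t m) b > -1) \<and> (\<forall>i\<in>I. i < m)"
    by (rule eventually_conj)
  from eventually_happens'[OF sequentially_bot this] obtain m
    where rep: "\<And>b. b \<in> B \<Longrightarrow> representation B (t m) b > -1" and "I \<subseteq> {..<m}"
    by auto
  have "(\<Sum>k<m. g k) = (\<Sum>k\<in>{..<m} - I. g k) + (\<Sum>b\<in>B. b)"
    using sum.subset_diff[OF \<open>I \<subseteq> {..<m}\<close> finite_lessThan] by (simp add: B_def sum.reindex[OF I(2)])
  then have v_eq: "v = (\<Sum>k\<in>{..<m} - I. g k) + ((\<Sum>b\<in>B. b) + t m)"
    by (simp add: t_def)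
  have "(\<Sum>b\<in>B. b) + t m \<in> C"
    using rep by (intro convex_cone_sum_add_span[OF C B(4) B(1) t_span] less_imp_le)
  with convex_cone_sum[OF C g] show ?thesis
    unfolding v_eq by (rule convex_cone_add[OF C])
qed

lemma linear_funpow: "linear f \<Longrightarrow> linear (f ^^ n)" for f :: "'a::real_vector \<Rightarrow> 'a"
  by (induction n) (auto simp: linear_compose linear_id)

lemma linear_iterates_diff_sums:
  fixes f :: "'a::real_normed_vector \<Rightarrow> 'a"
  assumes "linear f" and "(\<lambda>k. (f ^^ k) v) \<longlonglongrightarrow> 0"
  shows "(\<lambda>k. (f ^^ k) (v - f v)) sums v"
proof -
  have "(f ^^ k) (v - f v) = (f ^^ k) v - (f ^^ Suc k) v" for k
    by (simp add: linear_diff[OF linear_funpow[OF assms(1)]] funpow_swap1)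
  then show ?thesis using telescope_sums'[OF assms(2)] by simp
qed

lemma mem_convex_cone_if_iterates_tendsto_zero:
  fixes \<psi> :: "'a::euclidean_space \<Rightarrow> 'a"
  assumes C: "convex_cone C" and \<psi>: "linear \<psi>" and \<psi>_C: "\<psi> ` C \<subseteq> C"
    and lim: "(\<lambda>k. (\<psi> ^^ k) v) \<longlonglongrightarrow> 0" and diff: "v - \<psi> v \<in> C"
  shows "v \<in> C"
proof (rule sums_mem_convex_cone[OF C])
  show "(\<psi> ^^ k) (v - \<psi> v) \<in> C" for k
    using diff \<psi>_C by (induction k) auto
  show "(\<lambda>k. (\<psi> ^^ k) (v - \<psi> v)) sums v"
    by (rule linear_iterates_diff_sums[OF \<psi> lim])
qed

section \<open>Powers of complex matrices\<close>

lemma pow_smult_mat: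
  fixes A :: "'a::comm_semiring_1 mat"
  assumes "A \<in> carrier_mat n n"
  shows "(a \<cdot>\<^sub>m A) ^\<^sub>m k = a ^ k \<cdot>\<^sub>m A ^\<^sub>m k"
proof (induction k)
  case 0
  show ?case using assms by (auto intro!: eq_matI)
next
  case (Suc k)
  have "(a \<cdot>\<^sub>m A) ^\<^sub>m Suc k = (a ^ k \<cdot>\<^sub>m A ^\<^sub>m k) * (a \<cdot>\<^sub>m A)"
    using Suc by simp
  also have "\<dots> = a ^ k \<cdot>\<^sub>m (a \<cdot>\<^sub>m (A ^\<^sub>m k * A))"
    using mult_smult_assoc_mat[OF pow_carrier_mat[OF assms] smult_carrier_mat[OF assms]]
      mult_smult_distrib[OF pow_carrier_mat[OF assms] assms] by simp
  also have "\<dots> = a ^ Suc k \<cdot>\<^sub>m A ^\<^sub>m Suc k"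
    by (auto intro!: eq_matI simp: ac_simps)
  finally show ?case .
qed

lemma eigenvalue_smult_mat:
  fixes A :: "'a::field mat"
  assumes "A \<in> carrier_mat n n" and "eigenvalue A l"
  shows "eigenvalue (a \<cdot>\<^sub>m A) (a * l)"
proof -
  obtain v where v: "v \<in> carrier_vec n" "v \<noteq> 0\<^sub>v n" "A *\<^sub>v v = l \<cdot>\<^sub>v v"
    using assms unfolding eigenvalue_def eigenvector_def by auto
  have "(a \<cdot>\<^sub>m A) *\<^sub>v v = a \<cdot>\<^sub>v (A *\<^sub>v v)"
    using assms(1) v(1) by (auto intro!: eq_vecI simp: scalar_prod_def sum_distrib_left ac_simps)
  also have "\<dots> = (a * l) \<cdot>\<^sub>v v" by (simp add: v(3) smult_smult_assoc)
  finally show ?thesis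
    using assms(1) v unfolding eigenvalue_def eigenvector_def by auto
qed

lemma pow_mat_norm_bounded:
  fixes A :: "complex mat"
  assumes A: "A \<in> carrier_mat n n" and ev: "\<And>l. eigenvalue A l \<Longrightarrow> cmod l < 1"
  shows "\<exists>c. \<forall>k. norm_bound (A ^\<^sub>m k) c"
proof -
  obtain as where as: "char_poly A = (\<Prod>a\<leftarrow>as. [:- a, 1:])"
    using char_poly_factorized[OF A] by auto
  have "norm a < 1" if "a \<in> set as" for a
    using ev eigenvalue_root_char_poly[OF A] linear_poly_root[OF that] as by simp
  \<comment> \<open>no eigenvalue has norm 1, so N = 0 and the exponent N - 1 is 0 on nat: a constant bound\<close>
  then have "\<exists>c1 c2. \<forall>k. norm_bound (A ^\<^sub>m k) (c1 + c2 * of_nat k ^ (0 - 1))"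
    by (intro factored_char_poly_norm_bound_cof[OF A as]) force+
  then show ?thesis by auto
qed

lemma pow_mat_norm_bound_geometric:
  fixes A :: "complex mat"
  assumes A: "A \<in> carrier_mat n n" and r: "r > 0" and ev: "\<And>l. eigenvalue A l \<Longrightarrow> cmod l < r"
  shows "\<exists>c. \<forall>k. norm_bound (A ^\<^sub>m k) (c * r ^ k)"
proof -
  define B where "B = complex_of_real (1 / r) \<cdot>\<^sub>m A"
  have B: "B \<in> carrier_mat n n" using A by (simp add: B_def)
  have A_eq: "A = complex_of_real r \<cdot>\<^sub>m B"
    using A r by (auto intro!: eq_matI simp: B_def)
  have "cmod l < 1" if "eigenvalue B l" for l
  proof -
    have "eigenvalue A (complex_of_real r * l)"
      using eigenvalue_smult_mat[OF B that] A_eq by simp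
    then have "r * cmod l < r * 1"
      using ev r by (fastforce simp: norm_mult)
    with r show ?thesis by simp
  qed
  then obtain c where c: "\<And>k. norm_bound (B ^\<^sub>m k) c"
    using pow_mat_norm_bounded[OF B] by blast
  have "norm_bound (A ^\<^sub>m k) (c * r ^ k)" for k
    unfolding norm_bound_def
  proof (intro allI impI)
    fix i j assume "i < dim_row (A ^\<^sub>m k)" "j < dim_col (A ^\<^sub>m k)"
    then have ij: "i < n" "j < n" using carrier_matD[OF pow_carrier_mat[OF A]] by simp_all
    have "(A ^\<^sub>m k) $$ (i, j) = complex_of_real (r ^ k) * (B ^\<^sub>m k) $$ (i, j)"
      using ij B by (simp add: A_eq pow_smult_mat[OF B] pow_carrier_mat)
    moreover have "norm ((B ^\<^sub>m k) $$ (i, j)) \<le> c"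
      using c[of k] ij B by (auto simp: norm_bound_def pow_carrier_mat)
    ultimately show "norm ((A ^\<^sub>m k) $$ (i, j)) \<le> c * r ^ k"
      using r by (simp add: norm_mult norm_power mult_left_mono mult.commute)
  qed
  then show ?thesis by blast
qed

lemma pow_mat_tendsto_zero:
  fixes A :: "complex mat"
  assumes A: "A \<in> carrier_mat n n" and ev: "\<And>l. eigenvalue A l \<Longrightarrow> cmod l < 1"
    and ij: "i < n" "j < n"
  shows "(\<lambda>k. (A ^\<^sub>m k) $$ (i, j)) \<longlonglongrightarrow> 0"
proof -
  have n: "n > 0" using ij by simp
  define \<rho> where "\<rho> = spectral_radius A"
  have "\<rho> \<in> cmod ` {l. eigenvalue A l}"
    using spectral_radius_mem_max(1)[OF A n] by (simp add: \<rho>_def spectrum_def)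
  with ev have \<rho>: "0 \<le> \<rho>" "\<rho> < 1" by auto
  have ev_le: "cmod l \<le> \<rho>" if "eigenvalue A l" for l
    using spectral_radius_mem_max(2)[OF A n] that by (auto simp: \<rho>_def spectrum_def)
  define r where "r = (1 + \<rho>) / 2"
  have r: "0 < r" "r < 1" "\<rho> < r" using \<rho> by (auto simp: r_def)
  have "cmod l < r" if "eigenvalue A l" for l
    using ev_le[OF that] r(3) by simp
  then obtain c where "\<And>k. norm_bound (A ^\<^sub>m k) (c * r ^ k)"
    using pow_mat_norm_bound_geometric[OF A r(1)] by blast
  then have bound: "\<forall>k. norm ((A ^\<^sub>m k) $$ (i, j)) \<le> c * r ^ k"
    using A ij by (auto simp: norm_bound_def)
  have lim: "(\<lambda>k. c * r ^ k) \<longlonglongrightarrow> 0"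
    using r by (intro tendsto_mult_right_zero LIMSEQ_power_zero) auto
  show ?thesis
    using Lim_null_comparison[OF always_eventually[OF bound] lim] .
qed

section \<open>Complex eigenvalues of linear maps of a euclidean space\<close>

definition basis_enum :: "nat \<Rightarrow> 'a::euclidean_space" where
  "basis_enum = (SOME e. bij_betw e {..<DIM('a)} Basis)"

definition coord_vec :: "'a::euclidean_space \<Rightarrow> complex Matrix.vec" where
  "coord_vec x = Matrix.vec DIM('a) (\<lambda>i. complex_of_real (x \<bullet> basis_enum i))"

text \<open>Matrices are complex because the spectral theory of the Jordan normal form library
is developed over \<complex>.\<close>

definition coord_mat :: "('a::euclidean_space \<Rightarrow> 'a) \<Rightarrow> complex mat" where
  "coord_mat f = mat DIM('a) DIM('a) (\<lambda>(i, j). complex_of_real (f (basis_enum j) \<bullet> basis_enum i))"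

lemma bij_betw_basis_enum: "bij_betw basis_enum {..<DIM('a)} (Basis :: 'a::euclidean_space set)"
proof -
  have "\<exists>e :: nat \<Rightarrow> 'a. bij_betw e {..<DIM('a)} Basis"
    using ex_bij_betw_nat_finite[of "Basis :: 'a set"] by (simp add: lessThan_atLeast0)
  then show ?thesis unfolding basis_enum_def by (rule someI_ex)
qed

lemma inner_basis_enum:
  assumes "i < DIM('a)" and "j < DIM('a)"
  shows "basis_enum j \<bullet> (basis_enum i :: 'a::euclidean_space) = (if i = j then 1 else 0)"
proof -
  have "basis_enum i \<in> (Basis :: 'a set)" "basis_enum j \<in> (Basis :: 'a set)"
    using assms bij_betwE[OF bij_betw_basis_enum] by blast+
  moreover have "basis_enum i = (basis_enum j :: 'a) \<longleftrightarrow> i = j"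
    using assms bij_betw_imp_inj_on[OF bij_betw_basis_enum] by (auto dest: inj_onD)
  ultimately show ?thesis by (auto simp: inner_Basis)
qed

lemma inner_sum_basis_enum:
  assumes "i < DIM('a)"
  shows "(\<Sum>j<DIM('a). c j *\<^sub>R basis_enum j) \<bullet> (basis_enum i :: 'a::euclidean_space) = c i"
  using assms by (simp add: inner_sum_left inner_basis_enum if_distrib cong: if_cong)

lemma basis_enum_expansion: "(\<Sum>j<DIM('a). (x \<bullet> basis_enum j) *\<^sub>R basis_enum j) = (x :: 'a::euclidean_space)"
  using sum.reindex_bij_betw[OF bij_betw_basis_enum, of "\<lambda>b. (x \<bullet> b) *\<^sub>R b"]
  by (simp add: euclidean_representation)

lemma euclidean_eq_basis_enumI:
  assumes "\<And>i. i < DIM('a) \<Longrightarrow> x \<bullet> basis_enum i = y \<bullet> (basis_enum i :: 'a::euclidean_space)"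
  shows "x = y"
proof -
  have "x = (\<Sum>j<DIM('a). (x \<bullet> basis_enum j) *\<^sub>R basis_enum j)"
    by (rule basis_enum_expansion[symmetric])
  also have "\<dots> = (\<Sum>j<DIM('a). (y \<bullet> basis_enum j) *\<^sub>R basis_enum j)"
    using assms by (intro sum.cong) auto
  also have "\<dots> = y"
    by (rule basis_enum_expansion)
  finally show ?thesis .
qed

lemma coord_vec_carrier [simp]: "coord_vec (x :: 'a) \<in> carrier_vec DIM('a::euclidean_space)"
  by (simp add: coord_vec_def)

lemma coord_mat_carrier [simp]: "coord_mat (f :: 'a \<Rightarrow> 'a) \<in> carrier_mat DIM('a::euclidean_space) DIM('a)"
  by (simp add: coord_mat_def)

lemma dim_coord_mat [simp]:
  "dim_row (coord_mat (f :: 'a \<Rightarrow> 'a)) = DIM('a::euclidean_space)"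
  "dim_col (coord_mat (f :: 'a \<Rightarrow> 'a)) = DIM('a::euclidean_space)"
  by (simp_all add: coord_mat_def)

lemma coord_mat_mult_coord_vec:
  fixes f :: "'a::euclidean_space \<Rightarrow> 'a"
  assumes "linear f"
  shows "coord_mat f *\<^sub>v coord_vec x = coord_vec (f x)"
proof (rule eq_vecI)
  fix i assume "i < dim_vec (coord_vec (f x))"
  then have i: "i < DIM('a)" by (simp add: coord_vec_def)
  have "f x \<bullet> basis_enum i = (\<Sum>j<DIM('a). (f (basis_enum j) \<bullet> basis_enum i) * (x \<bullet> basis_enum j))"
    by (subst (1) basis_enum_expansion[of x, symmetric])
      (simp add: linear_sum[OF assms] linear_scale[OF assms] inner_sum_left mult.commute)
  then show "(coord_mat f *\<^sub>v coord_vec x) $ i = coord_vec (f x) $ i"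
    using i by (simp add: coord_mat_def coord_vec_def scalar_prod_def lessThan_atLeast0)
qed (simp add: coord_mat_def coord_vec_def)

lemma coord_mat_pow_mult_coord_vec:
  fixes f :: "'a::euclidean_space \<Rightarrow> 'a"
  assumes "linear f"
  shows "coord_mat f ^\<^sub>m k *\<^sub>v coord_vec x = coord_vec ((f ^^ k) x)"
proof (induction k arbitrary: x)
  case 0
  show ?case by (simp add: coord_mat_def)
next
  case (Suc k)
  have "coord_mat f ^\<^sub>m Suc k *\<^sub>v coord_vec x = coord_mat f ^\<^sub>m k *\<^sub>v (coord_mat f *\<^sub>v coord_vec x)"
    using assoc_mult_mat_vec[OF pow_carrier_mat[OF coord_mat_carrier] coord_mat_carrier coord_vec_carrier]
    by simp
  then show ?case
    by (simp add: coord_mat_mult_coord_vec[OF assms] Suc funpow_swap1)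
qed

lemma complex_eigenvalue_if_eigenvalue_coord_mat:
  fixes f :: "'a::euclidean_space \<Rightarrow> 'a"
  assumes f: "linear f" and "eigenvalue (coord_mat f) l"
  shows "complex_eigenvalue f l"
proof -
  obtain z where z: "z \<in> carrier_vec DIM('a)" "z \<noteq> 0\<^sub>v DIM('a)" "coord_mat f *\<^sub>v z = l \<cdot>\<^sub>v z"
    using assms(2) unfolding eigenvalue_def eigenvector_def by (auto simp: coord_mat_def)
  define x :: 'a where "x = (\<Sum>j<DIM('a). Re (z $ j) *\<^sub>R basis_enum j)"
  define y :: 'a where "y = (\<Sum>j<DIM('a). Im (z $ j) *\<^sub>R basis_enum j)"
  have z_eq: "z = coord_vec x + \<i> \<cdot>\<^sub>v coord_vec y"
    using z(1) by (intro eq_vecI) (auto simp: coord_vec_def x_def y_def inner_sum_basis_enum complex_eq_iff)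
  have "coord_mat f *\<^sub>v z = coord_vec (f x) + \<i> \<cdot>\<^sub>v coord_vec (f y)"
    unfolding z_eq
    by (simp add: mult_add_distrib_mat_vec[of _ "DIM('a)" "DIM('a)"] mult_mat_vec[of _ "DIM('a)" "DIM('a)"]
        coord_mat_mult_coord_vec[OF f])
  with z(3) have lz: "l \<cdot>\<^sub>v z = coord_vec (f x) + \<i> \<cdot>\<^sub>v coord_vec (f y)" by simp
  have coords: "l * z $ i = complex_of_real (f x \<bullet> basis_enum i) + \<i> * complex_of_real (f y \<bullet> basis_enum i)"
    if "i < DIM('a)" for i
    using arg_cong[OF lz, where f = "\<lambda>v. v $ i"] that z(1) by (simp add: coord_vec_def)
  have z_coords: "z $ i = complex_of_real (x \<bullet> basis_enum i) + \<i> * complex_of_real (y \<bullet> basis_enum i)"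
    if "i < DIM('a)" for i
    using arg_cong[OF z_eq, where f = "\<lambda>v. v $ i"] that by (simp add: coord_vec_def)
  have "f x \<bullet> basis_enum i = (Re l *\<^sub>R x - Im l *\<^sub>R y) \<bullet> basis_enum i"
    and "f y \<bullet> basis_enum i = (Im l *\<^sub>R x + Re l *\<^sub>R y) \<bullet> basis_enum i"
    if "i < DIM('a)" for i
    using arg_cong[OF coords[OF that], where f = Re] arg_cong[OF coords[OF that], where f = Im]
    unfolding z_coords[OF that] by (simp_all add: inner_diff_left inner_add_left)
  then have "f x = Re l *\<^sub>R x - Im l *\<^sub>R y" and "f y = Im l *\<^sub>R x + Re l *\<^sub>R y"
    by (auto intro: euclidean_eq_basis_enumI)
  moreover have "x \<noteq> 0 \<or> y \<noteq> 0"
    using z(2) z_eq by (auto simp: coord_vec_def zero_vec_def)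
  ultimately show ?thesis unfolding complex_eigenvalue_def by blast
qed

lemma linear_iterates_tendsto_zero:
  fixes f :: "'a::euclidean_space \<Rightarrow> 'a"
  assumes f: "linear f" and ev: "\<And>\<mu>. complex_eigenvalue f \<mu> \<Longrightarrow> cmod \<mu> < 1"
  shows "(\<lambda>k. (f ^^ k) x) \<longlonglongrightarrow> 0"
proof (subst tendsto_componentwise_iff, intro ballI)
  fix b :: 'a assume "b \<in> Basis"
  then obtain i where i: "i < DIM('a)" "b = basis_enum i"
    using bij_betw_basis_enum by (metis bij_betw_iff_bijections lessThan_iff)
  let ?A = "coord_mat f"
  have "complex_of_real ((f ^^ k) x \<bullet> basis_enum i) =
      (\<Sum>j<DIM('a). (?A ^\<^sub>m k) $$ (i, j) * complex_of_real (x \<bullet> basis_enum j))" for k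
    using arg_cong[OF coord_mat_pow_mult_coord_vec[OF f, of k x], where f = "\<lambda>v. v $ i"] i
    by (simp add: coord_vec_def scalar_prod_def lessThan_atLeast0 pow_carrier_mat)
  moreover have "(\<lambda>k. \<Sum>j<DIM('a). (?A ^\<^sub>m k) $$ (i, j) * complex_of_real (x \<bullet> basis_enum j))
      \<longlonglongrightarrow> 0"
    using pow_mat_tendsto_zero[OF coord_mat_carrier ev[OF complex_eigenvalue_if_eigenvalue_coord_mat[OF f]] i(1)]
    by (intro tendsto_null_sum tendsto_mult_left_zero) auto
  ultimately have "(\<lambda>k. complex_of_real ((f ^^ k) x \<bullet> basis_enum i)) \<longlonglongrightarrow> complex_of_real 0"
    by simp
  then show "(\<lambda>k. (f ^^ k) x \<bullet> b) \<longlonglongrightarrow> 0 \<bullet> b"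
    unfolding tendsto_of_real_iff using i(2) by simp
qed

lemma complex_eigenvalue_inverse:
  fixes f g :: "'a::real_vector \<Rightarrow> 'a"
  assumes g: "linear g" and fg: "\<And>x. f (g x) = x" and ev: "complex_eigenvalue g \<mu>"
  shows "complex_eigenvalue f (inverse \<mu>)"
proof -
  obtain x y where xy: "x \<noteq> 0 \<or> y \<noteq> 0"
    and gx: "g x = Re \<mu> *\<^sub>R x - Im \<mu> *\<^sub>R y" and gy: "g y = Im \<mu> *\<^sub>R x + Re \<mu> *\<^sub>R y"
    using ev unfolding complex_eigenvalue_def by blast
  have "\<mu> \<noteq> 0"
  proof
    assume "\<mu> = 0"
    then have "x = f 0" "y = f 0" using fg[of x] fg[of y] gx gy by simp_all
    moreover have "f 0 = 0" using fg[of 0] linear_0[OF g] by simp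
    ultimately show False using xy by simp
  qed
  define \<nu> where "\<nu> = inverse \<mu>"
  have \<nu>\<mu>: "\<nu> * \<mu> = 1" using \<open>\<mu> \<noteq> 0\<close> by (simp add: \<nu>_def)
  have re: "Re \<nu> * Re \<mu> - Im \<nu> * Im \<mu> = 1" using arg_cong[OF \<nu>\<mu>, of Re] by simp
  have im: "Re \<nu> * Im \<mu> + Im \<nu> * Re \<mu> = 0" using arg_cong[OF \<nu>\<mu>, of Im] by simp
  have "g (Re \<nu> *\<^sub>R x - Im \<nu> *\<^sub>R y) =
      (Re \<nu> * Re \<mu> - Im \<nu> * Im \<mu>) *\<^sub>R x - (Re \<nu> * Im \<mu> + Im \<nu> * Re \<mu>) *\<^sub>R y"
    by (simp add: linear_diff[OF g] linear_scale[OF g] gx gy algebra_simps)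
  then have "f x = Re \<nu> *\<^sub>R x - Im \<nu> *\<^sub>R y"
    using fg[of "Re \<nu> *\<^sub>R x - Im \<nu> *\<^sub>R y"] by (simp add: re im)
  have "g (Im \<nu> *\<^sub>R x + Re \<nu> *\<^sub>R y) =
      (Re \<nu> * Im \<mu> + Im \<nu> * Re \<mu>) *\<^sub>R x + (Re \<nu> * Re \<mu> - Im \<nu> * Im \<mu>) *\<^sub>R y"
    by (simp add: linear_add[OF g] linear_scale[OF g] gx gy algebra_simps)
  then have "f y = Im \<nu> *\<^sub>R x + Re \<nu> *\<^sub>R y"
    using fg[of "Im \<nu> *\<^sub>R x + Re \<nu> *\<^sub>R y"] by (simp add: re im)
  with \<open>f x = _\<close> xy show ?thesis
    unfolding complex_eigenvalue_def \<nu>_def by blast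
qed

theorem proposition3p2:
  fixes \<phi> :: "'a::euclidean_space \<Rightarrow> 'a" and C :: "'a set"
  assumes "linear \<phi>" and "bij \<phi>"
    and "convex_cone C" and "\<phi> ` C = C"
    and "\<And>\<mu>. complex_eigenvalue \<phi> \<mu> \<Longrightarrow> cmod \<mu> > 1"
  shows "(\<lambda>v. \<phi> v - v) -` C \<subseteq> C"
proof
  fix v assume v: "v \<in> (\<lambda>v. \<phi> v - v) -` C"
  define \<psi> where "\<psi> = inv_into UNIV \<phi>"
  have \<psi>: "linear \<psi>"
    unfolding \<psi>_def using assms(1,2) by (simp add: bij_is_inj inj_linear_imp_inv_linear)
  have \<phi>_\<psi>: "\<phi> (\<psi> x) = x" and \<psi>_\<phi>: "\<psi> (\<phi> x) = x" for x
    unfolding \<psi>_def using assms(2) by (simp_all add: bij_is_surj surj_f_inv_f bij_is_inj)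
  have "\<psi> ` C = \<psi> ` \<phi> ` C" using assms(4) by simp
  also have "\<dots> = C" by (simp add: image_image \<psi>_\<phi>)
  finally have \<psi>_C: "\<psi> ` C \<subseteq> C" by simp
  have "cmod \<mu> < 1" if "complex_eigenvalue \<psi> \<mu>" for \<mu>
    using assms(5)[OF complex_eigenvalue_inverse[OF \<psi> \<phi>_\<psi> that]]
    by (simp add: norm_inverse one_less_inverse_iff)
  then have lim: "(\<lambda>k. (\<psi> ^^ k) v) \<longlonglongrightarrow> 0"
    by (rule linear_iterates_tendsto_zero[OF \<psi>])
  have "v - \<psi> v = \<psi> (\<phi> v - v)" by (simp add: linear_diff[OF \<psi>] \<psi>_\<phi>)
  also have "\<dots> \<in> C" using \<psi>_C v by auto
  finally show "v \<in> C"
    by (rule mem_convex_cone_if_iterates_tendsto_zero[OF assms(3) \<psi> \<psi>_C lim])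
qed

end
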